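(* Let $a,b,c$ be positive numbers with $a<b<c$. Define $\mathcal Z_{a,b}=\{0\}$ if $a/b\notin\mathbb Q$, and $\mathcal Z_{a,b}=\{0,b/q,2b/q,\dots,(p-1)b/q\}$ if $a/b=p/q$ with $p,q$ coprime positive integers. Then $\mathcal D_{a,b,c}=\emptyset$ if and only if $\mathcal D_{a,b,c}\cap(\mathcal Z_{a,b}\cup(c-\mathcal Z_{a,b}))=\emptyset$.
   Context: For $a,b,c>0$ and $t\in\mathbb R$, $\mathbf M_{a,b,c}(t)=(\chi_{[0,c)}(t-\mu+\lambda))_{\mu\in a\mathbb Z,\lambda\in b\mathbb Z}$ is the infinite matrix with rows indexed by $a\mathbb Z$ and columns by $b\mathbb Z$, acting by $(\mathbf M_{a,b,c}(t)\mathbf x)(\mu)=\sum_{\lambda\in b\mathbb Z}\chi_{[0,c)}(t-\mu+\lambda)\mathbf x(\lambda)$. $\mathcal B_b$ is the set of vectors $(\mathbf x(\lambda))_{\lambda\in b\mathbb Z}$ with entries in $\{0,1\}$, and $\mathcal B_b^0=\{\mathbf x\in\mathcal B_b:\mathbf x(0)=1\}$. $\mathbf 2$ denotes the vector indexed by $a\mathbb Z$ all of whose entries are $2$. $\mathcal D_{a,b,c}=\{t\in\mathbb R:\mathbf M_{a,b,c}(t)\mathbf x=\mathbf 2\text{ for some }\mathbf x\in\mathcal B_b^0\}$. *)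

theory Defs
  imports Complex_Main
begin

definition chi :: "real \<Rightarrow> real \<Rightarrow> real" where
  "chi c s = (if 0 \<le> s \<and> s < c then 1 else 0)"

text \<open>Vectors indexed by bZ are represented as functions on int (index k stands for
  lambda = b*k); rows indexed by aZ are represented by m :: int (mu = a*m).
  (M_{a,b,c}(t) x)(a*m) = sum over k of chi(t - a*m + b*k) * x(k); the sum ranges over
  the (finite, since b > 0) set of k where the indicator is nonzero.\<close>
definition Mmul :: "real \<Rightarrow> real \<Rightarrow> real \<Rightarrow> real \<Rightarrow> (int \<Rightarrow> real) \<Rightarrow> int \<Rightarrow> real" where
  "Mmul a b c t x m =
     (\<Sum>k\<in>{k::int. chi c (t - a * of_int m + b * of_int k) \<noteq> 0}.
         chi c (t - a * of_int m + b * of_int k) * x k)"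

definition Bvec :: "(int \<Rightarrow> real) set" where
  "Bvec = {x. \<forall>k. x k \<in> {0, 1}}"

definition Bvec0 :: "(int \<Rightarrow> real) set" where
  "Bvec0 = {x \<in> Bvec. x 0 = 1}"

definition Dset :: "real \<Rightarrow> real \<Rightarrow> real \<Rightarrow> real set" where
  "Dset a b c = {t. \<exists>x\<in>Bvec0. \<forall>m::int. Mmul a b c t x m = 2}"

definition Zset :: "real \<Rightarrow> real \<Rightarrow> real set" where
  "Zset a b = (if a / b \<in> \<rat> then
      {real j * b / real q | j p q :: nat. 0 < p \<and> 0 < q \<and> coprime p q
                                  \<and> a / b = real p / real q \<and> j < p}
    else {0})"

end

theory Submission
  imports Defs "HOL-Library.Diagonal_Subsequence" "HOL-Library.Countable" "HOL-Library.Infinite_Set"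
begin

text \<open>Since \<open>0 \<in> \<Z>\<^sub>a\<^sub>,\<^sub>b\<close>, it suffices to show that a nonempty \<open>\<D>\<^sub>a\<^sub>,\<^sub>b\<^sub>,\<^sub>c\<close> contains
  \<open>0\<close> or \<open>c\<close>. The set \<open>\<D>\<close> is invariant under translation by \<open>a\<int>\<close>, and a solution \<open>x\<close> at \<open>t\<close>
  yields, after reindexing, a solution at \<open>t + bk\<close> whenever \<open>x(bk) = 1\<close>; so every point
  \<open>t - am + bk\<close> with \<open>x(bk) = 1\<close> lies in \<open>\<D>\<close>. Each row sees only finitely many columns, so a
  diagonal argument in \<open>{0,1}\<^sup>\<int>\<close> shows that \<open>\<D>\<close> is closed from the right, and
  \<open>s = min (\<D> \<inter> [0,\<infinity>))\<close> exists. If \<open>s > 0\<close>, moving \<open>t\<close> from \<open>s\<close> to \<open>s - \<epsilon>\<close> keeps \<open>x\<close> a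
  solution unless some point \<open>s - am + bk\<close> with \<open>x(bk) = 1\<close> lies in \<open>[0,\<epsilon>)\<close> or in \<open>[c,c+\<epsilon>)\<close>.
  The first is excluded by minimality of \<open>s\<close>; if the second happens for every \<open>\<epsilon>\<close>, then
  \<open>c \<in> \<D>\<close> by right closedness.\<close>

lemma finite_valued_pointwise_convergent_subseq:
  fixes f :: "nat \<Rightarrow> 'a::countable \<Rightarrow> 'b"
  assumes "finite V" and "\<And>n k. f n k \<in> V"
  obtains r g where "strict_mono r" and "\<And>k. \<forall>\<^sub>F n in sequentially. f (r n) k = g k"
proof -
  define P where "P i s \<longleftrightarrow> (\<forall>n. f (s n) (from_nat i) = f (s 0) (from_nat i))"
    for i and s :: "nat \<Rightarrow> nat"
  have "\<exists>r. strict_mono r \<and> P i (s \<circ> r)" for i and s :: "nat \<Rightarrow> nat"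
  proof -
    have "\<forall>n\<in>UNIV. \<exists>v\<in>V. f (s n) (from_nat i) = v"
      using assms(2) by simp
    from pigeonhole_infinite_rel[OF infinite_UNIV_nat assms(1) this]
    obtain v where "infinite {n. f (s n) (from_nat i) = v}"
      by auto
    then obtain r :: "nat \<Rightarrow> nat" where "strict_mono r" "\<forall>n. r n \<in> {n. f (s n) (from_nat i) = v}"
      using infinite_enumerate by blast
    then show ?thesis
      unfolding P_def by (intro exI[of _ r]) simp
  qed
  then interpret subseqs P
    by unfold_locales
  have diagseq_P: "P i (diagseq \<circ> (+) (Suc i))" for i
    by (rule diagseq_holds) (unfold P_def comp_def, metis)
  have diag: "f (diagseq (Suc (to_nat k) + d)) k = f (diagseq (Suc (to_nat k))) k" for k d
  proof -
    have "f ((diagseq \<circ> (+) (Suc (to_nat k))) d) (from_nat (to_nat k))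
        = f ((diagseq \<circ> (+) (Suc (to_nat k))) 0) (from_nat (to_nat k))"
      using diagseq_P unfolding P_def by (rule spec)
    then show ?thesis
      by simp
  qed
  have "\<forall>\<^sub>F n in sequentially. f (diagseq n) k = f (diagseq (Suc (to_nat k))) k" for k
  proof (rule eventually_sequentiallyI)
    fix n assume "Suc (to_nat k) \<le> n"
    then obtain d where "n = Suc (to_nat k) + d"
      using le_Suc_ex by blast
    then show "f (diagseq n) k = f (diagseq (Suc (to_nat k))) k"
      using diag by simp
  qed
  with that[OF subseq_diagseq] show ?thesis .
qed

definition row_support :: "real \<Rightarrow> real \<Rightarrow> real \<Rightarrow> real \<Rightarrow> int \<Rightarrow> int set" where
  "row_support a b c t m =
     {k. 0 \<le> t - a * of_int m + b * of_int k \<and> t - a * of_int m + b * of_int k < c}"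

lemma finite_row_support:
  assumes "b > 0"
  shows "finite (row_support a b c t m)"
proof -
  have "row_support a b c t m \<subseteq> {\<lfloor>(a * of_int m - t) / b\<rfloor> .. \<lceil>(a * of_int m - t + c) / b\<rceil>}"
  proof
    fix k assume "k \<in> row_support a b c t m"
    then have "a * of_int m - t \<le> b * of_int k" "b * of_int k < a * of_int m - t + c"
      unfolding row_support_def by auto
    then have "(a * of_int m - t) / b \<le> of_int k" "of_int k < (a * of_int m - t + c) / b"
      using assms by (simp_all add: pos_divide_le_eq pos_less_divide_eq mult.commute)
    then show "k \<in> {\<lfloor>(a * of_int m - t) / b\<rfloor> .. \<lceil>(a * of_int m - t + c) / b\<rceil>}"
      by (auto simp: floor_le_iff le_ceiling_iff)
  qed
  then show ?thesis
    using finite_subset by blast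
qed

lemma Mmul_eq_card:
  assumes "b > 0" and "x \<in> Bvec"
  shows "Mmul a b c t x m = real (card {k \<in> row_support a b c t m. x k = 1})"
proof -
  have supp: "{k. chi c (t - a * of_int m + b * of_int k) \<noteq> 0} = row_support a b c t m"
    by (auto simp: chi_def row_support_def)
  have "Mmul a b c t x m = (\<Sum>k\<in>row_support a b c t m. if x k = 1 then 1 else 0)"
    unfolding Mmul_def supp using assms(2)
    by (intro sum.cong) (auto simp: chi_def row_support_def Bvec_def)
  also have "\<dots> = real (card {k \<in> row_support a b c t m. x k = 1})"
    using finite_row_support[OF assms(1)] by (simp add: sum.If_cases Int_def conj_commute)
  finally show ?thesis .
qed

lemma Mmul_shift_rows:
  "Mmul a b c (t + a * of_int j) x m = Mmul a b c t x (m - j)"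
  by (simp add: Mmul_def algebra_simps)

lemma Mmul_shift_columns:
  "Mmul a b c (t + b * of_int j) (\<lambda>k. x (k + j)) m = Mmul a b c t x m"
  unfolding Mmul_def
  by (rule sum.reindex_bij_witness[of _ "\<lambda>k. k - j" "\<lambda>k. k + j"]) (auto simp: algebra_simps)

lemma Dset_shift_rows:
  assumes "t \<in> Dset a b c"
  shows "t + a * of_int j \<in> Dset a b c"
proof -
  obtain x where "x \<in> Bvec0" "\<And>m. Mmul a b c t x m = 2"
    using assms unfolding Dset_def by blast
  moreover have "Mmul a b c (t + a * of_int j) x m = 2" for m
    using \<open>\<And>m. Mmul a b c t x m = 2\<close> by (simp add: Mmul_shift_rows)
  ultimately show ?thesis
    unfolding Dset_def by blast
qed

lemma Dset_shift_columns:
  assumes "x \<in> Bvec0" and "\<forall>m. Mmul a b c t x m = 2" and "x j = 1"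
  shows "t + b * of_int j \<in> Dset a b c"
proof -
  have "(\<lambda>k. x (k + j)) \<in> Bvec0"
    using assms(1,3) by (auto simp: Bvec0_def Bvec_def)
  moreover have "Mmul a b c (t + b * of_int j) (\<lambda>k. x (k + j)) m = 2" for m
    using assms(2) by (simp add: Mmul_shift_columns)
  ultimately show ?thesis
    unfolding Dset_def by blast
qed

lemma Dset_translate:
  assumes "x \<in> Bvec0" and "\<forall>m. Mmul a b c t x m = 2" and "x k = 1"
  shows "t - a * of_int m + b * of_int k \<in> Dset a b c"
  using Dset_shift_rows[OF Dset_shift_columns[OF assms], of "- m"] by (simp add: algebra_simps)

lemma row_support_right_locally_constant:
  assumes "b > 0"
  obtains \<delta> where "\<delta> > 0"
    and "\<And>v. u \<le> v \<Longrightarrow> v < u + \<delta> \<Longrightarrow> row_support a b c v m = row_support a b c u m"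
proof -
  define p where "p k = u - a * of_int m + b * of_int k" for k
  define F where "F = {k. -1 \<le> p k \<and> p k < c}"
  have "F = row_support a b (c + 1) (u + 1) m"
    by (auto simp: F_def row_support_def p_def)
  then have "finite F"
    using finite_row_support[OF assms] by simp
  define g where "g k = (if 0 \<le> p k then c - p k else - p k)" for k
  define \<delta> where "\<delta> = Min (insert 1 (g ` F))"
  have "\<delta> > 0" "\<delta> \<le> 1" and \<delta>_le: "\<And>k. k \<in> F \<Longrightarrow> \<delta> \<le> g k"
    unfolding \<delta>_def using \<open>finite F\<close> by (auto simp: g_def F_def)
  have "row_support a b c v m = row_support a b c u m" if "u \<le> v" "v < u + \<delta>" for v
  proof -
    have "0 \<le> p k + (v - u) \<and> p k + (v - u) < c \<longleftrightarrow> 0 \<le> p k \<and> p k < c" for k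
    proof (cases "k \<in> F")
      case True
      then have "\<delta> \<le> g k"
        by (rule \<delta>_le)
      then show ?thesis
        using that by (auto simp: g_def split: if_splits)
    next
      case False
      then show ?thesis
        using \<open>\<delta> \<le> 1\<close> that by (auto simp: F_def)
    qed
    moreover have "v - a * of_int m + b * of_int k = p k + (v - u)" for k
      by (simp add: p_def)
    ultimately show ?thesis
      unfolding row_support_def by (simp only: p_def[symmetric])
  qed
  with \<open>\<delta> > 0\<close> that show ?thesis by blast
qed

lemma Bvec0_pointwise_limit:
  assumes "\<And>n. xs n \<in> Bvec0" and "\<And>k. \<forall>\<^sub>F n in sequentially. xs n k = y k"
  shows "y \<in> Bvec0"
proof -
  have "\<forall>\<^sub>F n in sequentially. y k \<in> {0, 1} \<and> (k = 0 \<longrightarrow> y k = 1)" for k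
    using assms(2)[of k]
  proof eventually_elim
    case (elim n)
    have "xs n k \<in> {0, 1}" "xs n 0 = 1"
      using assms(1)[of n] by (simp_all add: Bvec0_def Bvec_def)
    with elim show ?case
      by auto
  qed
  then show ?thesis
    by (simp add: Bvec0_def Bvec_def)
qed

lemma Mmul_eventually_eq_right_limit:
  assumes "b > 0" and "y \<in> Bvec" and "\<And>n. xs n \<in> Bvec"
    and "v \<longlonglongrightarrow> u" and "\<And>n. u \<le> v n"
    and "\<And>k. \<forall>\<^sub>F n in sequentially. xs n k = y k"
  shows "\<forall>\<^sub>F n in sequentially. Mmul a b c (v n) (xs n) m = Mmul a b c u y m"
proof -
  obtain \<delta> where "\<delta> > 0"
    and \<delta>: "\<And>w. u \<le> w \<Longrightarrow> w < u + \<delta> \<Longrightarrow> row_support a b c w m = row_support a b c u m"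
    using row_support_right_locally_constant[OF assms(1)] by blast
  have "\<forall>\<^sub>F n in sequentially. v n < u + \<delta>"
    using order_tendstoD(2)[OF assms(4), of "u + \<delta>"] \<open>\<delta> > 0\<close> by simp
  moreover have "\<forall>\<^sub>F n in sequentially. \<forall>k\<in>row_support a b c u m. xs n k = y k"
    using finite_row_support[OF assms(1)] assms(6) by (simp add: eventually_ball_finite)
  ultimately show ?thesis
  proof eventually_elim
    case (elim n)
    then have "row_support a b c (v n) m = row_support a b c u m"
      using \<delta> assms(5) by simp
    with elim have "{k \<in> row_support a b c (v n) m. xs n k = 1} = {k \<in> row_support a b c u m. y k = 1}"
      by auto
    then show ?case
      using assms(2,3) by (simp add: Mmul_eq_card[OF assms(1)])
  qed
qed

lemma Dset_right_closed:
  assumes "b > 0" and approx: "\<And>\<epsilon>. \<epsilon> > 0 \<Longrightarrow> \<exists>v\<in>Dset a b c. u \<le> v \<and> v < u + \<epsilon>"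
  shows "u \<in> Dset a b c"
proof -
  have "\<forall>n. \<exists>w. w \<in> Dset a b c \<and> u \<le> w \<and> w < u + inverse (real (Suc n))"
    using approx[of "inverse (real (Suc _))"] by (simp add: Bex_def)
  then obtain v where v: "\<And>n. v n \<in> Dset a b c" "\<And>n. u \<le> v n"
    and v_less: "\<And>n. v n < u + inverse (real (Suc n))"
    by metis
  have "\<forall>n. \<exists>x. x \<in> Bvec0 \<and> (\<forall>m. Mmul a b c (v n) x m = 2)"
    using v(1) unfolding Dset_def by blast
  then obtain xs where xs: "\<And>n. xs n \<in> Bvec0" and xs_rows: "\<And>n m. Mmul a b c (v n) (xs n) m = 2"
    by metis
  have "xs n k \<in> {0, 1}" for n k
    using xs by (simp add: Bvec0_def Bvec_def)
  then obtain r y where "strict_mono r" and y: "\<And>k. \<forall>\<^sub>F n in sequentially. xs (r n) k = y k"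
    using finite_valued_pointwise_convergent_subseq[of "{0, 1}" xs] by blast
  have "y \<in> Bvec0"
    using xs y by (rule Bvec0_pointwise_limit)
  have "\<forall>\<^sub>F n in sequentially. u \<le> v n"
    using v(2) by simp
  moreover have "\<forall>\<^sub>F n in sequentially. v n \<le> u + inverse (real (Suc n))"
    using v_less by (intro always_eventually allI less_imp_le)
  moreover have "(\<lambda>n. u + inverse (real (Suc n))) \<longlonglongrightarrow> u"
    using tendsto_add[OF tendsto_const LIMSEQ_inverse_real_of_nat, of u] by simp
  ultimately have "v \<longlonglongrightarrow> u"
    by (rule tendsto_sandwich[OF _ _ tendsto_const])
  then have "(\<lambda>n. v (r n)) \<longlonglongrightarrow> u"
    using LIMSEQ_subseq_LIMSEQ[OF _ \<open>strict_mono r\<close>] by (simp add: comp_def)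
  have "Mmul a b c u y m = 2" for m
  proof -
    have "\<forall>\<^sub>F n in sequentially. Mmul a b c (v (r n)) (xs (r n)) m = Mmul a b c u y m"
      using \<open>b > 0\<close> \<open>y \<in> Bvec0\<close> xs \<open>(\<lambda>n. v (r n)) \<longlonglongrightarrow> u\<close> v(2) y
      by (intro Mmul_eventually_eq_right_limit) (simp_all add: Bvec0_def)
    then show ?thesis
      by (simp add: xs_rows)
  qed
  with \<open>y \<in> Bvec0\<close> show ?thesis
    unfolding Dset_def by blast
qed

lemma Mmul_shift_left_eq:
  assumes "b > 0" and "x \<in> Bvec" and "0 \<le> \<epsilon>"
    and gap_left: "\<And>k. x k = 1 \<Longrightarrow> 0 \<le> s - a * of_int m + b * of_int k \<Longrightarrow> \<epsilon> \<le> s - a * of_int m + b * of_int k"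
    and gap_right: "\<And>k. x k = 1 \<Longrightarrow> \<not> (c \<le> s - a * of_int m + b * of_int k \<and> s - a * of_int m + b * of_int k < c + \<epsilon>)"
  shows "Mmul a b c (s - \<epsilon>) x m = Mmul a b c s x m"
proof -
  have "k \<in> row_support a b c (s - \<epsilon>) m \<longleftrightarrow> k \<in> row_support a b c s m" if "x k = 1" for k
    using gap_left[OF that] gap_right[OF that] \<open>0 \<le> \<epsilon>\<close>
    by (simp add: row_support_def algebra_simps) linarith
  then have "{k \<in> row_support a b c (s - \<epsilon>) m. x k = 1} = {k \<in> row_support a b c s m. x k = 1}"
    by blast
  then show ?thesis
    using Mmul_eq_card[OF assms(1,2)] by simp
qed

lemma Dset_has_nonneg_min:
  assumes "0 < a" and "0 < b" and "Dset a b c \<noteq> {}"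
  obtains s where "s \<in> Dset a b c" and "0 \<le> s"
    and "\<And>v. v \<in> Dset a b c \<Longrightarrow> 0 \<le> v \<Longrightarrow> s \<le> v"
proof -
  define S where "S = Dset a b c \<inter> {0..}"
  obtain t where "t \<in> Dset a b c"
    using assms(3) by blast
  have "- t = a * (- t / a)"
    using assms(1) by simp
  also have "\<dots> \<le> a * of_int \<lceil>- t / a\<rceil>"
    using assms(1) by (intro mult_left_mono) simp_all
  finally have "- t \<le> a * of_int \<lceil>- t / a\<rceil>" .
  then have "t + a * of_int \<lceil>- t / a\<rceil> \<in> S"
    using Dset_shift_rows[OF \<open>t \<in> Dset a b c\<close>] by (simp add: S_def)
  then have "S \<noteq> {}"
    by blast
  have "bdd_below S"
    by (rule bdd_belowI[of _ 0]) (simp add: S_def)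
  have "0 \<le> Inf S"
    using \<open>S \<noteq> {}\<close> by (rule cInf_greatest) (simp add: S_def)
  moreover have lower: "Inf S \<le> v" if "v \<in> Dset a b c" "0 \<le> v" for v
    using \<open>bdd_below S\<close> that by (intro cInf_lower) (simp_all add: S_def)
  moreover have "Inf S \<in> Dset a b c"
  proof (rule Dset_right_closed[OF assms(2)])
    fix \<epsilon> :: real assume "\<epsilon> > 0"
    then obtain v where "v \<in> S" "v < Inf S + \<epsilon>"
      using cInf_lessD[OF \<open>S \<noteq> {}\<close>, of "Inf S + \<epsilon>"] by auto
    then show "\<exists>v\<in>Dset a b c. Inf S \<le> v \<and> v < Inf S + \<epsilon>"
      using lower by (auto simp: S_def)
  qed
  ultimately show ?thesis
    using that by blast
qed

lemma Dset_shift_left: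
  assumes "b > 0" and x: "x \<in> Bvec0" "\<forall>m. Mmul a b c s x m = 2" and "0 \<le> \<epsilon>"
    and gap_left: "\<And>v. v \<in> Dset a b c \<Longrightarrow> 0 \<le> v \<Longrightarrow> \<epsilon> \<le> v"
    and gap_right: "\<And>v. v \<in> Dset a b c \<Longrightarrow> \<not> (c \<le> v \<and> v < c + \<epsilon>)"
  shows "s - \<epsilon> \<in> Dset a b c"
proof -
  have "Mmul a b c (s - \<epsilon>) x m = Mmul a b c s x m" for m
  proof (rule Mmul_shift_left_eq[OF assms(1) _ \<open>0 \<le> \<epsilon>\<close>])
    show "x \<in> Bvec"
      using x(1) by (simp add: Bvec0_def)
    fix k assume "x k = 1"
    then have "s - a * of_int m + b * of_int k \<in> Dset a b c"
      using Dset_translate[OF x] by blast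
    then show "0 \<le> s - a * of_int m + b * of_int k \<Longrightarrow> \<epsilon> \<le> s - a * of_int m + b * of_int k"
      and "\<not> (c \<le> s - a * of_int m + b * of_int k \<and> s - a * of_int m + b * of_int k < c + \<epsilon>)"
      by (simp_all add: gap_left gap_right)
  qed
  with x show ?thesis
    unfolding Dset_def by auto
qed

lemma Dset_nonempty_imp_zero_or_c:
  assumes "0 < a" and "0 < b" and "Dset a b c \<noteq> {}"
  shows "0 \<in> Dset a b c \<or> c \<in> Dset a b c"
proof (rule ccontr)
  assume "\<not> ?thesis"
  then have "0 \<notin> Dset a b c" and "c \<notin> Dset a b c"
    by simp_all
  obtain s where "s \<in> Dset a b c" "0 \<le> s" and s_min: "\<And>v. v \<in> Dset a b c \<Longrightarrow> 0 \<le> v \<Longrightarrow> s \<le> v"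
    using Dset_has_nonneg_min[OF assms] by blast
  with \<open>0 \<notin> Dset a b c\<close> have "0 < s"
    by (cases "s = 0") simp_all
  obtain x where x: "x \<in> Bvec0" "\<forall>m. Mmul a b c s x m = 2"
    using \<open>s \<in> Dset a b c\<close> unfolding Dset_def by blast
  have "\<not> (\<forall>\<epsilon>>0. \<exists>v\<in>Dset a b c. c \<le> v \<and> v < c + \<epsilon>)"
  proof
    assume "\<forall>\<epsilon>>0. \<exists>v\<in>Dset a b c. c \<le> v \<and> v < c + \<epsilon>"
    then have "c \<in> Dset a b c"
      by (intro Dset_right_closed[OF assms(2)]) simp
    with \<open>c \<notin> Dset a b c\<close> show False
      by simp
  qed
  then obtain \<delta> where "\<delta> > 0" and gap: "\<And>v. v \<in> Dset a b c \<Longrightarrow> \<not> (c \<le> v \<and> v < c + \<delta>)"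
    by auto
  define \<epsilon> where "\<epsilon> = min \<delta> s / 2"
  have "0 < min \<delta> s" "min \<delta> s \<le> \<delta>" "min \<delta> s \<le> s"
    using \<open>\<delta> > 0\<close> \<open>0 < s\<close> by simp_all
  then have "0 < \<epsilon>" "\<epsilon> < s" "\<epsilon> < \<delta>"
    unfolding \<epsilon>_def by linarith+
  have "s - \<epsilon> \<in> Dset a b c"
  proof (rule Dset_shift_left[OF assms(2) x])
    show "0 \<le> \<epsilon>"
      using \<open>0 < \<epsilon>\<close> by simp
    show "\<epsilon> \<le> v" if "v \<in> Dset a b c" "0 \<le> v" for v
      using s_min[OF that] \<open>\<epsilon> < s\<close> by simp
    show "\<not> (c \<le> v \<and> v < c + \<epsilon>)" if "v \<in> Dset a b c" for v
      using gap[OF that] \<open>\<epsilon> < \<delta>\<close> by auto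
  qed
  then have "s \<le> s - \<epsilon>"
    using s_min \<open>\<epsilon> < s\<close> by simp
  with \<open>0 < \<epsilon>\<close> show False
    by simp
qed

lemma zero_mem_Zset:
  assumes "0 < a" and "0 < b"
  shows "0 \<in> Zset a b"
proof (cases "a / b \<in> \<rat>")
  case True
  then obtain p q :: nat where "q \<noteq> 0" "\<bar>a / b\<bar> = real p / real q" "coprime p q"
    by (rule Rats_abs_nat_div_natE)
  moreover have "a / b > 0"
    using assms by simp
  ultimately have ab: "a / b = real p / real q"
    by (metis abs_of_pos)
  with \<open>a / b > 0\<close> have "p \<noteq> 0"
    by (metis div_0 less_irrefl of_nat_0)
  with ab \<open>q \<noteq> 0\<close> \<open>coprime p q\<close> have "0 \<in> {real j * b / real q | j p q :: nat. 0 < p \<and> 0 < q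
      \<and> coprime p q \<and> a / b = real p / real q \<and> j < p}"
    by (intro CollectI exI[of _ 0] exI[of _ p] exI[of _ q]) auto
  with True show ?thesis
    by (simp add: Zset_def)
next
  case False
  then show ?thesis
    by (simp add: Zset_def)
qed

theorem theorem3p3:
  fixes a b c :: real
  assumes "0 < a" and "a < b" and "b < c"
  shows "Dset a b c = {} \<longleftrightarrow>
         Dset a b c \<inter> (Zset a b \<union> (\<lambda>z. c - z) ` Zset a b) = {}"
proof
  assume "Dset a b c \<inter> (Zset a b \<union> (\<lambda>z. c - z) ` Zset a b) = {}"
  moreover have "0 \<in> Zset a b"
    using assms by (intro zero_mem_Zset) simp_all
  ultimately have "0 \<notin> Dset a b c" "c \<notin> Dset a b c"
    by force+
  then show "Dset a b c = {}"
    using Dset_nonempty_imp_zero_or_c[of a b c] assms by force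
qed simp

end
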